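(* Let $\phi:\mathbb{R}\to\mathbb{R}$ be differentiable, $f(z)=A\phi(Bz)$ with $A\in\mathbb{R}^{k_0\times k}$, $B\in\mathbb{R}^{k\times k_0}$, and $x\in\mathbb{R}^{k_0}$ with $\|x\|_2=1$. Run gradient descent on $\mathcal{L}(x,f)=\frac12\|x-f(x)\|_2^2$ from $A^{(0)}=x{a^{(0)}}^T$, $B^{(0)}=b^{(0)}x^T$ ($a^{(0)},b^{(0)}\in\mathbb{R}^k$). If the final weights $A^{(\infty)},B^{(\infty)}$ yield zero training error, then $A^{(\infty)}=xa^T$ and $B^{(\infty)}=bx^T$ for some $a,b\in\mathbb{R}^k$ with $a^T\phi(b)=1$.
   Context: $\phi$ is applied coordinatewise. Gradient descent updates $A\leftarrow A-\gamma\nabla_A\mathcal{L}$, $B\leftarrow B-\gamma\nabla_B\mathcal{L}$; $A^{(\infty)},B^{(\infty)}$ denote the weights at the end of training. *)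

theory Defs
  imports "HOL-Analysis.Analysis"
begin

definition vmap :: "(real \<Rightarrow> real) \<Rightarrow> real ^ 'n \<Rightarrow> real ^ 'n" where
  "vmap \<phi> v = (\<chi> i. \<phi> (v $ i))"

definition outer :: "real ^ 'm \<Rightarrow> real ^ 'n \<Rightarrow> real ^ 'n ^ 'm" where
  "outer u v = (\<chi> i j. u $ i * v $ j)"

definition net :: "(real \<Rightarrow> real) \<Rightarrow> real ^ 'k ^ 'k0 \<Rightarrow> real ^ 'k0 ^ 'k \<Rightarrow> real ^ 'k0 \<Rightarrow> real ^ 'k0" where
  "net \<phi> A B z = A *v vmap \<phi> (B *v z)"

definition loss :: "(real \<Rightarrow> real) \<Rightarrow> real ^ 'k0 \<Rightarrow> real ^ 'k ^ 'k0 \<Rightarrow> real ^ 'k0 ^ 'k \<Rightarrow> real" where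
  "loss \<phi> x A B = (1/2) * (norm (x - net \<phi> A B x))\<^sup>2"

end

theory Submission
  imports Defs
begin

text \<open>The loss depends on \<open>B\<close> only through \<open>B x\<close>, so \<open>\<nabla>\<^sub>B \<L>\<close> is orthogonal to every
  \<open>H\<close> with \<open>H x = 0\<close> and hence has the form \<open>g x\<^sup>T\<close>. If \<open>A = x a\<^sup>T\<close>, the residual
  \<open>x - A h\<close> is a multiple of \<open>x\<close>, so \<open>\<nabla>\<^sub>A \<L> = -(x - A h) h\<^sup>T\<close> has the form \<open>x c\<^sup>T\<close>.
  Thus every iterate lies in the closed subspaces \<open>{x a\<^sup>T}\<close> and \<open>{b x\<^sup>T}\<close>, and so do the
  final weights. For such weights \<open>\<L> = (1 - a\<^sup>T \<phi>(b))\<^sup>2 / 2\<close>, and zero error forces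
  \<open>a\<^sup>T \<phi>(b) = 1\<close>.\<close>

lemma outer_mult_vec: "outer u v *v w = (v \<bullet> w) *\<^sub>R u"
  by (simp add: outer_def vec_eq_iff matrix_vector_mult_def inner_vec_def
      sum_distrib_left mult_ac)

lemma inner_outer: "H \<bullet> outer u v = (H *v v) \<bullet> u"
  by (simp add: outer_def inner_vec_def matrix_vector_mult_def
      sum_distrib_left sum_distrib_right mult_ac)

lemma linear_outer_right: "linear (outer u)"
  by (rule linearI) (simp_all add: outer_def vec_eq_iff algebra_simps)

lemma linear_outer_left: "linear (\<lambda>u. outer u v)"
  by (rule linearI) (simp_all add: outer_def vec_eq_iff algebra_simps)

lemma subspace_range_outer_right: "subspace (range (outer u))"
  by (intro linear_subspace_image linear_outer_right subspace_UNIV)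

lemma subspace_range_outer_left: "subspace (range (\<lambda>u. outer u v))"
  by (intro linear_subspace_image linear_outer_left subspace_UNIV)

lemma gderiv_unique:
  assumes "GDERIV f X :> D" and "GDERIV f X :> D'"
  shows "D = D'"
proof -
  have "(\<lambda>h. h \<bullet> D) = (\<lambda>h. h \<bullet> D')"
    using assms unfolding gderiv_def by (rule has_derivative_unique)
  then have "(D - D') \<bullet> (D - D') = 0"
    by (metis inner_diff_right right_minus_eq)
  then show ?thesis by simp
qed

lemma gderiv_inner_eq_0_if_constant_on_line:
  assumes "GDERIV f X :> D" and "\<And>t::real. f (X + t *\<^sub>R H) = f X"
  shows "H \<bullet> D = 0"
proof -
  have line: "((\<lambda>t::real. X + t *\<^sub>R H) has_derivative (\<lambda>t. t *\<^sub>R H)) (at 0)"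
    by (auto intro!: derivative_eq_intros)
  have "(f has_derivative (\<lambda>h. h \<bullet> D)) (at ((\<lambda>t::real. X + t *\<^sub>R H) 0))"
    using assms(1) by (simp add: gderiv_def)
  from has_derivative_compose[OF line this]
  have "((\<lambda>t. f (X + t *\<^sub>R H)) has_derivative (\<lambda>t. (t *\<^sub>R H) \<bullet> D)) (at 0)"
    by (simp add: o_def)
  moreover have "((\<lambda>t::real. f (X + t *\<^sub>R H)) has_derivative (\<lambda>t. 0)) (at 0)"
    using assms(2) by simp
  ultimately have "(\<lambda>t::real. (t *\<^sub>R H) \<bullet> D) = (\<lambda>t. 0)"
    by (rule has_derivative_unique)
  then show ?thesis by (metis scaleR_one)
qed

lemma gderiv_eq_outer_if_factors_through_mult_vec:
  fixes X D :: "real ^ 'n ^ 'm"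
  assumes grad: "GDERIV f X :> D" and unit: "x \<bullet> x = 1"
    and factors: "\<And>Y. Y *v x = X *v x \<Longrightarrow> f Y = f X"
  shows "D = outer (D *v x) x"
proof -
  define H where "H = D - outer (D *v x) x"
  have Hx: "H *v x = 0"
    by (simp add: H_def matrix_vector_mult_diff_rdistrib outer_mult_vec unit)
  have "(X + t *\<^sub>R H) *v x = X *v x" for t
    by (simp add: matrix_vector_mult_add_rdistrib scaleR_matrix_vector_assoc[symmetric] Hx)
  then have "H \<bullet> D = 0"
    using gderiv_inner_eq_0_if_constant_on_line[OF grad] factors by blast
  moreover have "H \<bullet> outer (D *v x) x = 0"
    by (simp add: inner_outer Hx)
  ultimately have "H \<bullet> H = 0"
    by (simp add: H_def inner_diff_right)
  then show ?thesis by (simp add: H_def)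
qed

lemma gderiv_half_norm_residual_sq:
  fixes A :: "real ^ 'n ^ 'm"
  shows "GDERIV (\<lambda>A'. (1/2) * (norm (y - A' *v h))\<^sup>2) A :> - outer (y - A *v h) h"
proof -
  interpret mult_vec: bounded_linear "\<lambda>A::real ^ 'n ^ 'm. A *v h"
    by (simp add: bounded_linearI' matrix_vector_mult_add_rdistrib scaleR_matrix_vector_assoc)
  have "((\<lambda>A'. (1/2) * ((y - A' *v h) \<bullet> (y - A' *v h))) has_derivative
        (\<lambda>H. (1/2) * ((y - A *v h) \<bullet> - (H *v h) + - (H *v h) \<bullet> (y - A *v h)))) (at A)"
    by (auto intro!: derivative_eq_intros mult_vec.has_derivative)
  moreover have "(\<lambda>H. (1/2) * ((y - A *v h) \<bullet> - (H *v h) + - (H *v h) \<bullet> (y - A *v h)))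
      = (\<lambda>H. H \<bullet> - outer (y - A *v h) h)"
    by (auto simp: inner_outer inner_commute)
  ultimately show ?thesis
    by (simp add: gderiv_def power2_norm_eq_inner)
qed

lemma loss_gradient_A_at_outer:
  assumes "GDERIV (\<lambda>A'. loss \<phi> x A' B) (outer x a) :> G"
  shows "G = outer x ((a \<bullet> vmap \<phi> (B *v x) - 1) *\<^sub>R vmap \<phi> (B *v x))"
proof -
  let ?h = "vmap \<phi> (B *v x)"
  have "GDERIV (\<lambda>A'. loss \<phi> x A' B) (outer x a) :> - outer (x - outer x a *v ?h) ?h"
    unfolding loss_def net_def by (rule gderiv_half_norm_residual_sq)
  then have "G = - outer (x - outer x a *v ?h) ?h"
    using assms gderiv_unique by blast
  also have "x - outer x a *v ?h = (1 - a \<bullet> ?h) *\<^sub>R x"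
    by (simp add: outer_mult_vec algebra_simps)
  also have "- outer ((1 - a \<bullet> ?h) *\<^sub>R x) ?h = outer x ((a \<bullet> ?h - 1) *\<^sub>R ?h)"
    by (simp add: outer_def vec_eq_iff algebra_simps)
  finally show ?thesis .
qed

lemma loss_gradient_B_eq_outer:
  assumes "GDERIV (\<lambda>B'. loss \<phi> x A B') B :> G" and "x \<bullet> x = 1"
  shows "G = outer (G *v x) x"
  using assms by (rule gderiv_eq_outer_if_factors_through_mult_vec) (simp add: loss_def net_def)

lemma loss_outer_outer:
  assumes "norm x = 1"
  shows "loss \<phi> x (outer x a) (outer b x) = (1 - a \<bullet> vmap \<phi> b)\<^sup>2 / 2"
proof -
  have "x \<bullet> x = 1"
    using assms by (simp flip: power2_norm_eq_inner)
  then have "x - net \<phi> (outer x a) (outer b x) x = (1 - a \<bullet> vmap \<phi> b) *\<^sub>R x"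
    by (simp add: net_def outer_mult_vec inner_commute algebra_simps)
  then show ?thesis
    by (simp add: loss_def assms)
qed

theorem proposition3:
  fixes \<phi> :: "real \<Rightarrow> real"
    and x :: "real ^ 'k0::finite"
    and A :: "nat \<Rightarrow> real ^ 'k::finite ^ 'k0"
    and B :: "nat \<Rightarrow> real ^ 'k0 ^ 'k"
    and gA :: "nat \<Rightarrow> real ^ 'k ^ 'k0"
    and gB :: "nat \<Rightarrow> real ^ 'k0 ^ 'k"
    and a0 b0 :: "real ^ 'k"
    and \<gamma> :: real
    and Ainf :: "real ^ 'k ^ 'k0"
    and Binf :: "real ^ 'k0 ^ 'k"
  assumes phi_diff: "\<And>z. \<phi> differentiable (at z)"
    and x_norm: "norm x = 1"
    and A0: "A 0 = outer x a0"
    and B0: "B 0 = outer b0 x"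
    and gradA: "\<And>t. GDERIV (\<lambda>A'. loss \<phi> x A' (B t)) (A t) :> gA t"
    and gradB: "\<And>t. GDERIV (\<lambda>B'. loss \<phi> x (A t) B') (B t) :> gB t"
    and stepA: "\<And>t. A (Suc t) = A t - \<gamma> *\<^sub>R gA t"
    and stepB: "\<And>t. B (Suc t) = B t - \<gamma> *\<^sub>R gB t"
    and final: "(\<exists>T. Ainf = A T \<and> Binf = B T) \<or> (A \<longlonglongrightarrow> Ainf \<and> B \<longlonglongrightarrow> Binf)"
    and zero_err: "loss \<phi> x Ainf Binf = 0"
  shows "\<exists>a b :: real ^ 'k. Ainf = outer x a \<and> Binf = outer b x \<and> a \<bullet> vmap \<phi> b = 1"
proof -
  let ?SA = "range (outer x)" and ?SB = "range (\<lambda>b. outer b x)"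
  have iterates: "A t \<in> ?SA \<and> B t \<in> ?SB" for t
  proof (induction t)
    case 0
    show ?case using A0 B0 by simp
  next
    case (Suc t)
    then obtain a where a: "A t = outer x a" by blast
    have "gA t \<in> ?SA" "gB t \<in> ?SB"
      using loss_gradient_A_at_outer[OF gradA[of t, unfolded a]]
        loss_gradient_B_eq_outer[OF gradB] x_norm
      by (auto simp flip: power2_norm_eq_inner)
    moreover have "subspace ?SA" "subspace ?SB"
      by (rule subspace_range_outer_right subspace_range_outer_left)+
    ultimately show ?case
      using Suc unfolding stepA stepB by (blast intro: subspace_diff subspace_scale)
  qed
  have "Ainf \<in> ?SA \<and> Binf \<in> ?SB"
    using final iterates
      closed_sequentially[OF closed_subspace[OF subspace_range_outer_right]]
      closed_sequentially[OF closed_subspace[OF subspace_range_outer_left]]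
    by metis
  then obtain a b where ab: "Ainf = outer x a" "Binf = outer b x" by blast
  then have "a \<bullet> vmap \<phi> b = 1"
    using zero_err by (simp add: loss_outer_outer x_norm)
  with ab show ?thesis by blast
qed

end
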